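(* Let $B_m\in\mathbb{C}^{m\times m}$, let $\lambda_1,\ldots,\lambda_{m+1}\in\mathbb{C}$, let $P(\lambda)=\prod_{i=1}^{m+1}(\lambda-\lambda_i)$ and $\delta=\sum_{i=1}^{m+1}\lambda_i-\operatorname{tr}(B_m)$. For $b,c\in\mathbb{C}^m$ write $B_{m+1}(b,c)=\begin{pmatrix}B_m&c\\ b^{T}&\delta\end{pmatrix}$. Suppose $b,c\in\mathbb{C}^m$ satisfy $\det(\lambda I_{m+1}-B_{m+1}(b,c))=P(\lambda)$. Then: (i) $c$ is the unique $c'\in\mathbb{C}^m$ with $\det(\lambda I_{m+1}-B_{m+1}(b,c'))=P(\lambda)$ if and only if the pair $(B_m, b^T)$ is observable, i.e. $\operatorname{rank}(b,\,B_m^{T}b,\,(B_m^{T})^2b,\ldots)=m$; (ii) $b$ is the unique $b'\in\mathbb{C}^m$ with $\det(\lambda I_{m+1}-B_{m+1}(b',c))=P(\lambda)$ if and only if the pair $(B_m,c)$ is controllable, i.e. $\operatorname{rank}(c,\,B_mc,\,B_m^2c,\ldots)=m$. *)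

theory Defs
  imports "Jordan_Normal_Form.Char_Poly" "Jordan_Normal_Form.DL_Rank"
begin

definition bordered_mat :: "complex mat \<Rightarrow> complex vec \<Rightarrow> complex vec \<Rightarrow> complex \<Rightarrow> complex mat" where
  "bordered_mat B b c d =
     four_block_mat B (mat_of_cols (dim_row B) [c]) (mat_of_rows (dim_col B) [b]) (mat 1 1 (\<lambda>_. d))"

definition mat_trace :: "complex mat \<Rightarrow> complex" where
  "mat_trace A = (\<Sum>i<dim_row A. A $$ (i,i))"

definition krylov_mat :: "complex mat \<Rightarrow> complex vec \<Rightarrow> complex mat" where
  "krylov_mat B c = mat_of_cols (dim_row B) (map (\<lambda>k. (B ^\<^sub>m k) *\<^sub>v c) [0..<dim_row B])"

definition controllable :: "complex mat \<Rightarrow> complex vec \<Rightarrow> bool" where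
  "controllable B c \<longleftrightarrow> vec_space.rank (dim_row B) (krylov_mat B c) = dim_row B"

definition observable :: "complex mat \<Rightarrow> complex vec \<Rightarrow> bool" where
  "observable B b \<longleftrightarrow> vec_space.rank (dim_row B) (krylov_mat (transpose_mat B) b) = dim_row B"

end

theory Submission
  imports Defs
begin

text \<open>Expanding \<open>det(\<lambda>I - B\<^sub>m\<^sub>+\<^sub>1(b,c))\<close> along its last column gives
  \<open>(\<lambda> - \<delta>) \<chi>\<^sub>B(\<lambda>) - \<Sum>\<^sub>i c\<^sub>i u\<^sub>i(\<lambda>)\<close>, where the cofactors \<open>u\<^sub>i\<close> do not involve \<open>c\<close>.
  So \<open>c\<close> is determined by \<open>P\<close> iff no nonzero vector is orthogonal to all coefficient
  vectors \<open>w\<^sub>j = (coeff u\<^sub>i j)\<^sub>i\<close>. The last row of \<open>adj(N) N = det N \<cdot> I\<close> yields the backward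
  recursion \<open>w\<^sub>j = B\<^sup>T w\<^sub>j\<^sub>+\<^sub>1 + a\<^sub>j\<^sub>+\<^sub>1 b\<close> (\<open>a\<^sub>j\<close> the coefficients of \<open>\<chi>\<^sub>B\<close>),
  with \<open>w\<^sub>m\<^sub>-\<^sub>1 = b\<close> and \<open>w\<^sub>j = 0\<close> for \<open>j \<ge> m\<close>. Hence \<open>v \<bullet> w\<^sub>j = 0\<close> for all \<open>j\<close>
  iff \<open>b \<bullet> B\<^sup>k v = 0\<close> for all \<open>k < m\<close>,
  and the only such \<open>v\<close> is \<open>0\<close> iff the pair is observable. Part (ii) is part (i) for the
  transposed matrix. Neither the value of \<open>\<delta>\<close> nor the factorisation of \<open>P\<close> plays a role.\<close>

lemma pow_mat_Suc_left:
  fixes A :: "'a :: semiring_1 mat"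
  assumes A: "A \<in> carrier_mat n n"
  shows "A ^\<^sub>m Suc k = A * A ^\<^sub>m k"
proof (induction k)
  case (Suc k)
  have "A ^\<^sub>m Suc (Suc k) = (A * A ^\<^sub>m k) * A" using Suc by simp
  also have "\<dots> = A * (A ^\<^sub>m k * A)" using A by (simp add: assoc_mult_mat[of _ n n _ n _ n])
  finally show ?case by simp
qed (use A in simp)

lemma pow_mat_Suc_mult_vec:
  fixes A :: "'a :: semiring_1 mat"
  assumes "A \<in> carrier_mat n n" and "v \<in> carrier_vec n"
  shows "(A ^\<^sub>m Suc k) *\<^sub>v v = (A ^\<^sub>m k) *\<^sub>v (A *\<^sub>v v)"
  using assms by (simp add: assoc_mult_mat_vec[of _ n n _ n])

lemma transpose_pow_mat:
  fixes A :: "'a :: comm_semiring_1 mat"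
  assumes A: "A \<in> carrier_mat n n"
  shows "transpose_mat (A ^\<^sub>m k) = transpose_mat A ^\<^sub>m k"
proof (induction k)
  case (Suc k)
  have "transpose_mat (A ^\<^sub>m Suc k) = transpose_mat A * transpose_mat (A ^\<^sub>m k)"
    using A by (simp add: transpose_mult[of "A ^\<^sub>m k" n n A n])
  also have "\<dots> = transpose_mat A ^\<^sub>m Suc k"
    using Suc pow_mat_Suc_left[of "transpose_mat A" n k] A by simp
  finally show ?case .
qed (use A in simp)

lemma scalar_prod_transpose_mult_vec:
  fixes A :: "'a :: comm_semiring_0 mat"
  assumes A: "A \<in> carrier_mat nr nc" and v: "v \<in> carrier_vec nc" and w: "w \<in> carrier_vec nr"
  shows "v \<bullet> (transpose_mat A *\<^sub>v w) = (A *\<^sub>v v) \<bullet> w"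
proof -
  have "v \<bullet> (transpose_mat A *\<^sub>v w) = (transpose_mat A *\<^sub>v w) \<bullet> v"
    using A v w by (intro comm_scalar_prod[of _ nc]) auto
  also have "\<dots> = w \<bullet> (A *\<^sub>v v)" by (rule transpose_vec_mult_scalar[OF A v w])
  also have "\<dots> = (A *\<^sub>v v) \<bullet> w" using A v w by (intro comm_scalar_prod[of _ nr]) auto
  finally show ?thesis .
qed

lemma mult_mat_vec_zero_vec [simp]:
  fixes A :: "'a :: semiring_0 mat"
  assumes "A \<in> carrier_mat nr nc"
  shows "A *\<^sub>v 0\<^sub>v nc = 0\<^sub>v nr"
  using assms by (auto simp: vec_eq_iff scalar_prod_def)

lemma transpose_krylov_mat_mult_vec_index:
  assumes A: "A \<in> carrier_mat n n" and b: "b \<in> carrier_vec n" and v: "v \<in> carrier_vec n"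
    and k: "k < n"
  shows "(transpose_mat (krylov_mat A b) *\<^sub>v v) $ k = ((A ^\<^sub>m k) *\<^sub>v b) \<bullet> v"
proof -
  have "col (krylov_mat A b) k = (A ^\<^sub>m k) *\<^sub>v b"
    using A b k unfolding krylov_mat_def
    by (subst col_mat_of_cols) (auto intro!: mult_mat_vec_carrier[of _ n n])
  moreover have "dim_col (krylov_mat A b) = n" using A unfolding krylov_mat_def by simp
  ultimately show ?thesis using k by simp
qed

lemma observable_iff_orthogonal_powers:
  assumes B: "B \<in> carrier_mat m m" and b: "b \<in> carrier_vec m"
  shows "observable B b \<longleftrightarrow>
    (\<forall>v \<in> carrier_vec m. (\<forall>k<m. b \<bullet> ((B ^\<^sub>m k) *\<^sub>v v) = 0) \<longrightarrow> v = 0\<^sub>v m)"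
proof -
  let ?K = "krylov_mat (transpose_mat B) b"
  have K: "?K \<in> carrier_mat m m" using B unfolding krylov_mat_def by auto
  have entry: "(transpose_mat ?K *\<^sub>v v) $ k = b \<bullet> ((B ^\<^sub>m k) *\<^sub>v v)"
    if v: "v \<in> carrier_vec m" and k: "k < m" for v k
    using transpose_krylov_mat_mult_vec_index[of "transpose_mat B" m b v k]
      transpose_vec_mult_scalar[of "B ^\<^sub>m k" m m v b] transpose_pow_mat[OF B, of k] B b v k
    by simp
  have kernel: "transpose_mat ?K *\<^sub>v v = 0\<^sub>v m \<longleftrightarrow> (\<forall>k<m. b \<bullet> ((B ^\<^sub>m k) *\<^sub>v v) = 0)"
    if v: "v \<in> carrier_vec m" for v
    using K entry[OF v] by (auto simp: vec_eq_iff)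
  have "observable B b \<longleftrightarrow> det (transpose_mat ?K) \<noteq> 0"
    using B vec_space.det_rank_iff[OF K] det_transpose[OF K] unfolding observable_def by simp
  also have "\<dots> \<longleftrightarrow> (\<forall>v \<in> carrier_vec m. transpose_mat ?K *\<^sub>v v = 0\<^sub>v m \<longrightarrow> v = 0\<^sub>v m)"
    using det_0_iff_vec_prod_zero_field[of "transpose_mat ?K" m] K by auto
  finally show ?thesis using kernel by simp
qed

lemma char_poly_matrix_dim [simp]:
  "dim_row (char_poly_matrix A) = dim_row A"
  "dim_col (char_poly_matrix A) = dim_col A"
  unfolding char_poly_matrix_def by simp_all

lemma char_poly_matrix_index:
  assumes "A \<in> carrier_mat n n" and "i < n" and "j < n"
  shows "char_poly_matrix A $$ (i,j) = (if i = j then [:0,1:] else 0) - [:A $$ (i,j):]"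
  using assms by (simp add: char_poly_matrix_def)

lemma bordered_mat_dim [simp]:
  "dim_row (bordered_mat B b c d) = Suc (dim_row B)"
  "dim_col (bordered_mat B b c d) = Suc (dim_col B)"
  unfolding bordered_mat_def by simp_all

lemma bordered_mat_carrier:
  assumes "B \<in> carrier_mat m m"
  shows "bordered_mat B b c d \<in> carrier_mat (Suc m) (Suc m)"
  using assms by auto

lemma bordered_mat_index:
  assumes "B \<in> carrier_mat m m" and "b \<in> carrier_vec m" and "c \<in> carrier_vec m"
    and "i < Suc m" and "j < Suc m"
  shows "bordered_mat B b c d $$ (i,j) =
    (if i < m then if j < m then B $$ (i,j) else c $ i else if j < m then b $ j else d)"
  using assms unfolding bordered_mat_def by (auto simp: mat_of_cols_index mat_of_rows_index)

lemma transpose_bordered_mat: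
  assumes B: "B \<in> carrier_mat m m" and b: "b \<in> carrier_vec m" and c: "c \<in> carrier_vec m"
  shows "transpose_mat (bordered_mat B b c d) = bordered_mat (transpose_mat B) c b d"
proof -
  have BT: "transpose_mat B \<in> carrier_mat m m" using B by simp
  show ?thesis
    using B by (intro eq_matI)
      (auto simp: bordered_mat_index[OF B b c] bordered_mat_index[OF BT c b])
qed

lemma char_poly_bordered_mat_transpose:
  assumes B: "B \<in> carrier_mat m m" and b: "b \<in> carrier_vec m" and c: "c \<in> carrier_vec m"
  shows "char_poly (bordered_mat B b c d) = char_poly (bordered_mat (transpose_mat B) c b d)"
  using char_poly_transpose_mat[OF bordered_mat_carrier[OF B]] transpose_bordered_mat[OF B b c]
  by metis

text \<open>The cofactors of the last column of \<open>\<lambda>I - B\<^sub>m\<^sub>+\<^sub>1(b,c)\<close> do not depend on \<open>c\<close>, which is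
  deleted together with that column; we take \<open>c = 0\<close>.\<close>
definition border_cofactor :: "complex mat \<Rightarrow> complex vec \<Rightarrow> complex \<Rightarrow> nat \<Rightarrow> complex poly" where
  "border_cofactor B b d i =
     cofactor (char_poly_matrix (bordered_mat B b (0\<^sub>v (dim_row B)) d)) i (dim_row B)"

definition border_coeff_vec :: "complex mat \<Rightarrow> complex vec \<Rightarrow> complex \<Rightarrow> nat \<Rightarrow> complex vec" where
  "border_coeff_vec B b d j = vec (dim_row B) (\<lambda>i. coeff (border_cofactor B b d i) j)"

lemma dim_border_coeff_vec [simp]: "dim_vec (border_coeff_vec B b d j) = dim_row B"
  unfolding border_coeff_vec_def by simp

context
  fixes B :: "complex mat" and b :: "complex vec" and d :: complex and m :: nat
  assumes B: "B \<in> carrier_mat m m" and b: "b \<in> carrier_vec m"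
begin

lemma border_coeff_vec_carrier [simp]: "border_coeff_vec B b d j \<in> carrier_vec m"
  using B by (intro carrier_vecI) simp

lemma cofactor_char_poly_matrix_bordered_mat:
  assumes v: "v \<in> carrier_vec m" and i: "i < m"
  shows "cofactor (char_poly_matrix (bordered_mat B b v d)) i m = border_cofactor B b d i"
proof -
  have z: "0\<^sub>v m \<in> carrier_vec m" by simp
  have "mat_delete (char_poly_matrix (bordered_mat B b v d)) i m
      = mat_delete (char_poly_matrix (bordered_mat B b (0\<^sub>v m) d)) i m"
    using B i
    by (intro eq_matI)
      (auto simp: mat_delete_def char_poly_matrix_index[OF bordered_mat_carrier[OF B]]
        bordered_mat_index[OF B b v] bordered_mat_index[OF B b z])
  then show ?thesis using B unfolding border_cofactor_def cofactor_def by simp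
qed

lemma cofactor_char_poly_matrix_bordered_mat_last:
  assumes v: "v \<in> carrier_vec m"
  shows "cofactor (char_poly_matrix (bordered_mat B b v d)) m m = char_poly B"
proof -
  have "mat_delete (char_poly_matrix (bordered_mat B b v d)) m m = char_poly_matrix B"
    using B
    by (intro eq_matI)
      (auto simp: mat_delete_def char_poly_matrix_index[OF bordered_mat_carrier[OF B]]
        bordered_mat_index[OF B b v] char_poly_matrix_index[OF B])
  then show ?thesis unfolding cofactor_def char_poly_def by simp
qed

lemma char_poly_bordered_mat:
  assumes v: "v \<in> carrier_vec m"
  shows "char_poly (bordered_mat B b v d) =
    [:- d, 1:] * char_poly B - (\<Sum>i<m. [:v $ i:] * border_cofactor B b d i)"
proof -
  let ?N = "char_poly_matrix (bordered_mat B b v d)"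
  have "char_poly (bordered_mat B b v d) = (\<Sum>i<Suc m. ?N $$ (i,m) * cofactor ?N i m)"
    unfolding char_poly_def
    by (rule laplace_expansion_column) (use bordered_mat_carrier[OF B] in auto)
  also have "\<dots> = (\<Sum>i<m. ?N $$ (i,m) * cofactor ?N i m) + ?N $$ (m,m) * cofactor ?N m m"
    by simp
  also have "(\<Sum>i<m. ?N $$ (i,m) * cofactor ?N i m)
      = - (\<Sum>i<m. [:v $ i:] * border_cofactor B b d i)"
    by (simp add: sum_negf[symmetric] char_poly_matrix_index[OF bordered_mat_carrier[OF B]]
        bordered_mat_index[OF B b v] cofactor_char_poly_matrix_bordered_mat[OF v])
  also have "?N $$ (m,m) * cofactor ?N m m = [:- d, 1:] * char_poly B"
    by (simp add: char_poly_matrix_index[OF bordered_mat_carrier[OF B]] bordered_mat_index[OF B b v]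
        cofactor_char_poly_matrix_bordered_mat_last[OF v])
  finally show ?thesis by simp
qed

text \<open>Entry \<open>(m,k)\<close> of \<open>adj N \<cdot> N = det N \<cdot> I\<close> for \<open>N = \<lambda>I - B\<^sub>m\<^sub>+\<^sub>1(b,0)\<close>.\<close>
lemma border_cofactor_recurrence:
  assumes k: "k < m"
  shows "[:0,1:] * border_cofactor B b d k =
    (\<Sum>i<m. [:B $$ (i,k):] * border_cofactor B b d i) + [:b $ k:] * char_poly B"
proof -
  let ?u = "border_cofactor B b d"
  let ?N = "char_poly_matrix (bordered_mat B b (0\<^sub>v m) d)"
  have z: "0\<^sub>v m \<in> carrier_vec m" by simp
  have N: "?N \<in> carrier_mat (Suc m) (Suc m)"
    by (rule char_poly_matrix_closed[OF bordered_mat_carrier[OF B]])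
  have "0 = (adj_mat ?N * ?N) $$ (m,k)" using adj_mat(3)[OF N] k by simp
  also have "\<dots> = (\<Sum>i<Suc m. cofactor ?N i m * ?N $$ (i,k))"
    using B N k by (auto simp: adj_mat_def scalar_prod_def lessThan_atLeast0 intro!: sum.cong)
  also have "\<dots> = (\<Sum>i<m. ?u i * ?N $$ (i,k)) + char_poly B * ?N $$ (m,k)"
    by (simp add: cofactor_char_poly_matrix_bordered_mat[OF z]
        cofactor_char_poly_matrix_bordered_mat_last[OF z])
  also have "(\<Sum>i<m. ?u i * ?N $$ (i,k))
      = (\<Sum>i<m. (if i = k then [:0,1:] * ?u i else 0) - [:B $$ (i,k):] * ?u i)"
    using B k by (intro sum.cong)
      (auto simp: char_poly_matrix_index[OF bordered_mat_carrier[OF B]]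
        bordered_mat_index[OF B b z] algebra_simps)
  also have "\<dots> = [:0,1:] * ?u k - (\<Sum>i<m. [:B $$ (i,k):] * ?u i)"
    using k by (simp add: sum_subtractf)
  also have "?N $$ (m,k) = - [:b $ k:]"
    using B k by (simp add: char_poly_matrix_index[OF bordered_mat_carrier[OF B]]
        bordered_mat_index[OF B b z])
  finally show ?thesis by (simp add: algebra_simps)
qed

lemma transpose_mult_border_coeff_vec:
  "transpose_mat B *\<^sub>v border_coeff_vec B b d j + coeff (char_poly B) j \<cdot>\<^sub>v b
     = vec m (\<lambda>k. coeff ([:0,1:] * border_cofactor B b d k) j)"
proof (rule eq_vecI)
  fix k assume "k < dim_vec (vec m (\<lambda>k. coeff ([:0,1:] * border_cofactor B b d k) j))"
  then have k: "k < m" by simp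
  have "(transpose_mat B *\<^sub>v border_coeff_vec B b d j) $ k
      = (\<Sum>i<m. B $$ (i,k) * coeff (border_cofactor B b d i) j)"
    using B k by (simp add: border_coeff_vec_def scalar_prod_def lessThan_atLeast0)
  then show "(transpose_mat B *\<^sub>v border_coeff_vec B b d j + coeff (char_poly B) j \<cdot>\<^sub>v b) $ k
      = vec m (\<lambda>k. coeff ([:0,1:] * border_cofactor B b d k) j) $ k"
    using border_cofactor_recurrence[OF k] B b k by (simp add: coeff_sum mult.commute)
qed (use B b in simp)

lemma border_coeff_vec_Suc:
  "border_coeff_vec B b d j
     = transpose_mat B *\<^sub>v border_coeff_vec B b d (Suc j) + coeff (char_poly B) (Suc j) \<cdot>\<^sub>v b"
  using transpose_mult_border_coeff_vec[of "Suc j"] B by (simp add: border_coeff_vec_def)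

lemma border_coeff_vec_0:
  "transpose_mat B *\<^sub>v border_coeff_vec B b d 0 + coeff (char_poly B) 0 \<cdot>\<^sub>v b = 0\<^sub>v m"
  using transpose_mult_border_coeff_vec[of 0] by (simp add: zero_vec_def)

lemma border_coeff_vec_eq_0:
  assumes j: "m \<le> j"
  shows "border_coeff_vec B b d j = 0\<^sub>v m"
proof -
  define N where "N = max m (Suc (\<Sum>i<m. degree (border_cofactor B b d i)))"
  have vanish: "border_coeff_vec B b d n = 0\<^sub>v m" if n: "N \<le> n" for n
  proof -
    have "degree (border_cofactor B b d i) < n" if "i < m" for i
      using member_le_sum[of i "{..<m}" "\<lambda>i. degree (border_cofactor B b d i)"] that n
      unfolding N_def by simp
    then show ?thesis using B by (simp add: border_coeff_vec_def vec_eq_iff coeff_eq_0)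
  qed
  have degree_char_poly: "degree (char_poly B) = m"
    using degree_monic_char_poly[OF B] by simp
  show ?thesis
  proof (cases "N \<le> j")
    case False
    then have "j \<le> N" by simp
    then show ?thesis
    proof (induction j rule: inc_induct)
      case (step n)
      have "coeff (char_poly B) (Suc n) = 0"
        using degree_char_poly step.hyps(1) j by (simp add: coeff_eq_0)
      then have "coeff (char_poly B) (Suc n) \<cdot>\<^sub>v b = 0\<^sub>v m"
        using b by (intro eq_vecI) auto
      then show ?case using border_coeff_vec_Suc[of n] step.IH B by simp
    qed (use vanish in simp)
  qed (use vanish in simp)
qed

lemma border_coeff_vec_top:
  assumes "0 < m"
  shows "border_coeff_vec B b d (m - 1) = b"
  using border_coeff_vec_Suc[of "m - 1"] border_coeff_vec_eq_0[of m] degree_monic_char_poly[OF B]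
    assms B b by simp

lemma scalar_prod_border_coeff_vec_Suc:
  assumes v: "v \<in> carrier_vec m"
  shows "v \<bullet> border_coeff_vec B b d j
    = (B *\<^sub>v v) \<bullet> border_coeff_vec B b d (Suc j) + coeff (char_poly B) (Suc j) * (v \<bullet> b)"
proof -
  let ?w = "border_coeff_vec B b d (Suc j)" and ?a = "coeff (char_poly B) (Suc j)"
  have "v \<bullet> border_coeff_vec B b d j = v \<bullet> (transpose_mat B *\<^sub>v ?w + ?a \<cdot>\<^sub>v b)"
    by (simp only: border_coeff_vec_Suc[of j, symmetric])
  also have "\<dots> = v \<bullet> (transpose_mat B *\<^sub>v ?w) + v \<bullet> (?a \<cdot>\<^sub>v b)"
    by (rule scalar_prod_add_distrib[OF v])
      (use B b in \<open>auto intro!: mult_mat_vec_carrier[of _ m m]\<close>)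
  finally show ?thesis
    using scalar_prod_transpose_mult_vec[OF B v, of ?w] B b v by simp
qed

lemma scalar_prod_border_coeff_vec_0:
  assumes v: "v \<in> carrier_vec m"
  shows "(B *\<^sub>v v) \<bullet> border_coeff_vec B b d 0 + coeff (char_poly B) 0 * (v \<bullet> b) = 0"
proof -
  let ?w = "border_coeff_vec B b d 0" and ?a = "coeff (char_poly B) 0"
  have "0 = v \<bullet> (transpose_mat B *\<^sub>v ?w + ?a \<cdot>\<^sub>v b)"
    using border_coeff_vec_0 v by simp
  also have "\<dots> = v \<bullet> (transpose_mat B *\<^sub>v ?w) + v \<bullet> (?a \<cdot>\<^sub>v b)"
    by (rule scalar_prod_add_distrib[OF v])
      (use B b in \<open>auto intro!: mult_mat_vec_carrier[of _ m m]\<close>)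
  finally show ?thesis
    using scalar_prod_transpose_mult_vec[OF B v, of ?w] B b v by simp
qed

lemma orthogonal_border_coeff_vecs_mult_vec:
  assumes v: "v \<in> carrier_vec m" and orth: "\<forall>j. v \<bullet> border_coeff_vec B b d j = 0"
  shows "v \<bullet> b = 0" and "\<forall>j. (B *\<^sub>v v) \<bullet> border_coeff_vec B b d j = 0"
proof -
  show vb: "v \<bullet> b = 0"
  proof (cases "m = 0")
    case True
    then show ?thesis using v b by (simp add: scalar_prod_def)
  next
    case False
    then show ?thesis using orth[rule_format, of "m - 1"] border_coeff_vec_top by simp
  qed
  show "\<forall>j. (B *\<^sub>v v) \<bullet> border_coeff_vec B b d j = 0"
  proof
    fix j
    show "(B *\<^sub>v v) \<bullet> border_coeff_vec B b d j = 0"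
    proof (cases j)
      case 0
      then show ?thesis using scalar_prod_border_coeff_vec_0[OF v] vb by simp
    next
      case (Suc i)
      then show ?thesis using scalar_prod_border_coeff_vec_Suc[OF v, of i] orth vb by simp
    qed
  qed
qed

lemma powers_orthogonal_if_orthogonal_border_coeff_vecs:
  assumes "v \<in> carrier_vec m" and "\<forall>j. v \<bullet> border_coeff_vec B b d j = 0"
  shows "b \<bullet> ((B ^\<^sub>m k) *\<^sub>v v) = 0"
  using assms
proof (induction k arbitrary: v)
  case 0
  then show ?case
    using orthogonal_border_coeff_vecs_mult_vec(1) comm_scalar_prod[OF b 0(1)] B by simp
next
  case (Suc k)
  have "b \<bullet> ((B ^\<^sub>m k) *\<^sub>v (B *\<^sub>v v)) = 0"
    using Suc.IH orthogonal_border_coeff_vecs_mult_vec(2)[OF Suc.prems] Suc.prems(1) B by simp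
  then show ?case using pow_mat_Suc_mult_vec[OF B Suc.prems(1)] by simp
qed

lemma orthogonal_border_coeff_vec_if_powers_orthogonal:
  assumes "n \<le> m" and "v \<in> carrier_vec m" and "\<forall>k < m - n. b \<bullet> ((B ^\<^sub>m k) *\<^sub>v v) = 0"
  shows "v \<bullet> border_coeff_vec B b d n = 0"
  using assms
proof (induction n arbitrary: v rule: inc_induct)
  case base
  then show ?case using border_coeff_vec_eq_0[of m] by simp
next
  case (step n)
  have "(B *\<^sub>v v) \<bullet> border_coeff_vec B b d (Suc n) = 0"
  proof (rule step.IH)
    show "B *\<^sub>v v \<in> carrier_vec m" using B step.prems(1) by simp
    show "\<forall>k < m - Suc n. b \<bullet> ((B ^\<^sub>m k) *\<^sub>v (B *\<^sub>v v)) = 0"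
    proof (intro allI impI)
      fix k assume "k < m - Suc n"
      then have "Suc k < m - n" by simp
      then have "b \<bullet> ((B ^\<^sub>m Suc k) *\<^sub>v v) = 0" using step.prems(2) by blast
      then show "b \<bullet> ((B ^\<^sub>m k) *\<^sub>v (B *\<^sub>v v)) = 0"
        using pow_mat_Suc_mult_vec[OF B step.prems(1)] by simp
    qed
  qed
  moreover have "v \<bullet> b = 0"
  proof -
    have "b \<bullet> ((B ^\<^sub>m 0) *\<^sub>v v) = 0" using step.prems(2) step.hyps(2) zero_less_diff by blast
    then show ?thesis using B step.prems(1) comm_scalar_prod[OF b step.prems(1)] by simp
  qed
  ultimately show ?case using scalar_prod_border_coeff_vec_Suc[OF step.prems(1), of n] by simp
qed

lemma orthogonal_border_coeff_vecs_iff: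
  assumes v: "v \<in> carrier_vec m"
  shows "(\<forall>j. v \<bullet> border_coeff_vec B b d j = 0) \<longleftrightarrow> (\<forall>k<m. b \<bullet> ((B ^\<^sub>m k) *\<^sub>v v) = 0)"
proof
  assume powers: "\<forall>k<m. b \<bullet> ((B ^\<^sub>m k) *\<^sub>v v) = 0"
  show "\<forall>j. v \<bullet> border_coeff_vec B b d j = 0"
  proof
    fix j
    show "v \<bullet> border_coeff_vec B b d j = 0"
    proof (cases "j \<le> m")
      case True
      then show ?thesis
        using orthogonal_border_coeff_vec_if_powers_orthogonal[OF True v] powers by simp
    next
      case False
      then show ?thesis using border_coeff_vec_eq_0[of j] v by simp
    qed
  qed
qed (use powers_orthogonal_if_orthogonal_border_coeff_vecs[OF v] in blast)

lemma char_poly_bordered_mat_eq_iff: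
  assumes c: "c \<in> carrier_vec m" and c': "c' \<in> carrier_vec m"
  shows "char_poly (bordered_mat B b c' d) = char_poly (bordered_mat B b c d)
    \<longleftrightarrow> (\<forall>j. (c' - c) \<bullet> border_coeff_vec B b d j = 0)"
proof -
  have "char_poly (bordered_mat B b c' d) = char_poly (bordered_mat B b c d)
      \<longleftrightarrow> (\<Sum>i<m. [:c' $ i:] * border_cofactor B b d i)
        = (\<Sum>i<m. [:c $ i:] * border_cofactor B b d i)"
    unfolding char_poly_bordered_mat[OF c] char_poly_bordered_mat[OF c'] by simp
  also have "\<dots> \<longleftrightarrow> (\<forall>j. (\<Sum>i<m. c' $ i * coeff (border_cofactor B b d i) j)
      = (\<Sum>i<m. c $ i * coeff (border_cofactor B b d i) j))"
    by (simp add: poly_eq_iff coeff_sum)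
  also have "\<dots> \<longleftrightarrow> (\<forall>j. (c' - c) \<bullet> border_coeff_vec B b d j = 0)"
    using B c c' by (simp add: scalar_prod_def border_coeff_vec_def lessThan_atLeast0
        sum_subtractf algebra_simps)
  finally show ?thesis .
qed

lemma bordered_mat_last_column_unique_iff_observable:
  assumes c: "c \<in> carrier_vec m"
  shows "(\<forall>c' \<in> carrier_vec m.
      char_poly (bordered_mat B b c' d) = char_poly (bordered_mat B b c d) \<longrightarrow> c' = c)
    \<longleftrightarrow> observable B b"
proof -
  have "(\<forall>c' \<in> carrier_vec m.
      char_poly (bordered_mat B b c' d) = char_poly (bordered_mat B b c d) \<longrightarrow> c' = c)
    \<longleftrightarrow> (\<forall>v \<in> carrier_vec m. (\<forall>j. v \<bullet> border_coeff_vec B b d j = 0) \<longrightarrow> v = 0\<^sub>v m)"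
  proof (intro iffI ballI impI)
    fix v :: "complex vec"
    assume unique: "\<forall>c' \<in> carrier_vec m.
        char_poly (bordered_mat B b c' d) = char_poly (bordered_mat B b c d) \<longrightarrow> c' = c"
      and v: "v \<in> carrier_vec m" and orth: "\<forall>j. v \<bullet> border_coeff_vec B b d j = 0"
    have "(c + v) - c = v" using c v by (intro eq_vecI) auto
    then have "c + v = c"
      using unique char_poly_bordered_mat_eq_iff[OF c, of "c + v"] orth c v by simp
    then show "v = 0\<^sub>v m" using \<open>(c + v) - c = v\<close> c by simp
  next
    fix c' :: "complex vec"
    assume inj: "\<forall>v \<in> carrier_vec m. (\<forall>j. v \<bullet> border_coeff_vec B b d j = 0) \<longrightarrow> v = 0\<^sub>v m"
      and c': "c' \<in> carrier_vec m"
      and eq: "char_poly (bordered_mat B b c' d) = char_poly (bordered_mat B b c d)"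
    have "c' - c = 0\<^sub>v m" using inj char_poly_bordered_mat_eq_iff[OF c c'] eq c c' by simp
    then show "c' = c" using c c' by (intro eq_vecI) (auto simp: vec_eq_iff)
  qed
  also have "\<dots> \<longleftrightarrow> observable B b"
    using orthogonal_border_coeff_vecs_iff observable_iff_orthogonal_powers[OF B b] by simp
  finally show ?thesis .
qed

end

theorem mainTheorem5:
  fixes m :: nat and B :: "complex mat" and lam :: "nat \<Rightarrow> complex" and b c :: "complex vec"
  defines "P \<equiv> (\<Prod>i<m+1. [:- lam i, 1:])"
      and "\<delta> \<equiv> (\<Sum>i<m+1. lam i) - mat_trace B"
  assumes B: "B \<in> carrier_mat m m"
      and b: "b \<in> carrier_vec m" and c: "c \<in> carrier_vec m"
      and cp: "char_poly (bordered_mat B b c \<delta>) = P"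
  shows "((\<forall>c' \<in> carrier_vec m. char_poly (bordered_mat B b c' \<delta>) = P \<longrightarrow> c' = c)
            \<longleftrightarrow> observable B b)
       \<and> ((\<forall>b' \<in> carrier_vec m. char_poly (bordered_mat B b' c \<delta>) = P \<longrightarrow> b' = b)
            \<longleftrightarrow> controllable B c)"
proof
  show "(\<forall>c' \<in> carrier_vec m. char_poly (bordered_mat B b c' \<delta>) = P \<longrightarrow> c' = c)
      \<longleftrightarrow> observable B b"
    using bordered_mat_last_column_unique_iff_observable[OF B b c, of \<delta>] cp by simp
next
  have BT: "transpose_mat B \<in> carrier_mat m m" using B by simp
  have "controllable B c \<longleftrightarrow> observable (transpose_mat B) c"
    using B unfolding controllable_def observable_def by simp
  then show "(\<forall>b' \<in> carrier_vec m. char_poly (bordered_mat B b' c \<delta>) = P \<longrightarrow> b' = b)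
      \<longleftrightarrow> controllable B c"
    using bordered_mat_last_column_unique_iff_observable[OF BT c b, of \<delta>] cp
      char_poly_bordered_mat_transpose[OF B _ c] b by auto
qed

end
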